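(* Let $\{\mu_n\}$ be a sequence of positive finite measures on $\mathbb{R}$ such that each $G_{\mu_n}$ is injective on $\mathbb{C}^+$. If $\mu_n$ converges weakly to a nonzero positive finite measure $\mu$, then $G_\mu$ is injective on $\mathbb{C}^+$.
   Context: For a positive finite measure $\mu$ on $\mathbb{R}$, $G_\mu(z)=\int_{\mathbb{R}}\frac{1}{z-x}\,d\mu(x)$ for $z\in\mathbb{C}^+=\{\operatorname{Im}z>0\}$. Weak convergence means $\int f\,d\mu_n\to\int f\,d\mu$ for all bounded continuous $f$. *)

theory Defs
  imports "HOL-Probability.Probability"
begin

definition cauchy_transform :: "real measure \<Rightarrow> complex \<Rightarrow> complex" where
  "cauchy_transform \<mu> z = (\<integral>x. 1 / (z - complex_of_real x) \<partial>\<mu>)"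

definition weakly_converges :: "(nat \<Rightarrow> real measure) \<Rightarrow> real measure \<Rightarrow> bool" where
  "weakly_converges M N \<longleftrightarrow>
     (\<forall>f :: real \<Rightarrow> real. continuous_on UNIV f \<and> bounded (range f) \<longrightarrow>
        (\<lambda>n. \<integral>x. f x \<partial>(M n)) \<longlonglongrightarrow> (\<integral>x. f x \<partial>N))"

end

theory Submission
  imports Defs "HOL-Complex_Analysis.Great_Picard"
begin

text \<open>
  Each \<open>G\<^sub>\<mu>\<^sub>n\<close> is holomorphic on the upper half plane with
  \<open>\<bar>G\<^sub>\<mu>\<^sub>n(z)\<bar> \<le> \<mu>\<^sub>n(\<real>) / Im z\<close>; since the total masses converge, the family is
  locally bounded, and weak convergence gives \<open>G\<^sub>\<mu>\<^sub>n \<rightarrow> G\<^sub>\<mu>\<close> pointwise. By Montel's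
  theorem a subsequence converges locally uniformly, necessarily to \<open>G\<^sub>\<mu>\<close>, and by
  Hurwitz's theorem such a limit of injective functions is injective or constant.
  \<open>G\<^sub>\<mu>\<close> is not constant: \<open>G\<^sub>\<mu>(iy) \<rightarrow> 0\<close> as \<open>y \<rightarrow> \<infinity>\<close>, whereas
  \<open>Im G\<^sub>\<mu>(i) = -\<integral> 1/(1+x\<^sup>2) d\<mu> < 0\<close> because \<open>\<mu> \<noteq> 0\<close>.
\<close>

lemma Hurwitz_injective_pointwise_limit:
  fixes F :: "nat \<Rightarrow> complex \<Rightarrow> complex"
  assumes S: "open S" "connected S"
    and hol: "\<And>n. F n holomorphic_on S"
    and inj: "\<And>n. inj_on (F n) S"
    and bounded: "\<And>K. compact K \<Longrightarrow> K \<subseteq> S \<Longrightarrow> \<exists>B. \<forall>n. \<forall>z\<in>K. norm (F n z) \<le> B"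
    and lim: "\<And>z. z \<in> S \<Longrightarrow> (\<lambda>n. F n z) \<longlonglongrightarrow> g z"
    and nonconst: "\<not> g constant_on S"
  shows "inj_on g S"
proof -
  have "\<exists>B. \<forall>f\<in>range F. \<forall>z\<in>K. norm (f z) \<le> B" if "compact K" "K \<subseteq> S" for K
    using bounded[OF that] by blast
  then obtain h r where h: "h holomorphic_on S" "strict_mono r"
      "\<And>z. z \<in> S \<Longrightarrow> (\<lambda>n. F (r n) z) \<longlonglongrightarrow> h z"
      "\<And>K. compact K \<Longrightarrow> K \<subseteq> S \<Longrightarrow> uniform_limit K (F \<circ> r) h sequentially"
    using Montel[OF S(1) _ _ subset_refl, of F] hol by blast
  have hg: "h z = g z" if "z \<in> S" for z
  proof -
    have "(\<lambda>n. F (r n) z) \<longlonglongrightarrow> g z"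
      using LIMSEQ_subseq_LIMSEQ[OF lim[OF that] h(2)] by (simp add: o_def)
    with h(3)[OF that] show ?thesis
      by (rule LIMSEQ_unique)
  qed
  have "\<not> h constant_on S"
    using nonconst hg unfolding constant_on_def by metis
  then have "inj_on h S"
    using Hurwitz_injective[OF S _ h(1) h(4)] hol inj by simp
  then show ?thesis
    using hg inj_on_cong by metis
qed

lemma integrable_continuous_bounded:
  fixes f :: "real \<Rightarrow> 'b::{banach,second_countable_topology}"
  assumes "sets M = sets borel" "finite_measure M"
    and "continuous_on UNIV f" "\<And>x. norm (f x) \<le> B"
  shows "integrable M f"
proof -
  interpret finite_measure M by fact
  have "f \<in> borel_measurable M"
    using borel_measurable_continuous_onI[OF assms(3)]
    by (simp add: measurable_cong_sets[OF assms(1) refl])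
  then show ?thesis
    using assms(4) by (intro integrable_const_bound[where B=B]) auto
qed

lemma norm_integral_le_bound_mass:
  fixes f :: "'a \<Rightarrow> 'b::{banach,second_countable_topology}"
  assumes "finite_measure M" "integrable M f" "\<And>x. norm (f x) \<le> B"
  shows "norm (integral\<^sup>L M f) \<le> B * measure M (space M)"
proof -
  interpret finite_measure M by fact
  have "norm (integral\<^sup>L M f) \<le> integral\<^sup>L M (\<lambda>x. norm (f x))"
    by (rule integral_norm_bound)
  also have "\<dots> \<le> integral\<^sup>L M (\<lambda>x. B)"
    using assms(2,3) by (intro integral_mono) auto
  finally show ?thesis
    by (simp add: mult.commute)
qed

lemma weakly_converges_measure_space:
  assumes "weakly_converges \<mu>s \<mu>"
  shows "(\<lambda>n. measure (\<mu>s n) (space (\<mu>s n))) \<longlonglongrightarrow> measure \<mu> (space \<mu>)"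
  using assms[unfolded weakly_converges_def, rule_format, of "\<lambda>_. 1"] by simp

lemma weakly_converges_integral_complex:
  fixes f :: "real \<Rightarrow> complex"
  assumes "weakly_converges \<mu>s \<mu>"
    and "\<And>n. sets (\<mu>s n) = sets borel" "\<And>n. finite_measure (\<mu>s n)"
    and "sets \<mu> = sets borel" "finite_measure \<mu>"
    and f: "continuous_on UNIV f" "bounded (range f)"
  shows "(\<lambda>n. \<integral>x. f x \<partial>\<mu>s n) \<longlonglongrightarrow> (\<integral>x. f x \<partial>\<mu>)"
proof -
  obtain B where B: "\<And>x. norm (f x) \<le> B"
    using f(2) unfolding bounded_iff by blast
  have "\<bar>Re (f x)\<bar> \<le> B" "\<bar>Im (f x)\<bar> \<le> B" for x
    using B[of x] abs_Re_le_cmod[of "f x"] abs_Im_le_cmod[of "f x"] by linarith+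
  then have "bounded (range (\<lambda>x. Re (f x)))" "bounded (range (\<lambda>x. Im (f x)))"
    unfolding bounded_iff by auto
  moreover have "continuous_on UNIV (\<lambda>x. Re (f x))" "continuous_on UNIV (\<lambda>x. Im (f x))"
    using f(1) by (auto intro: continuous_intros)
  ultimately have "(\<lambda>n. \<integral>x. Re (f x) \<partial>\<mu>s n) \<longlonglongrightarrow> (\<integral>x. Re (f x) \<partial>\<mu>)"
      "(\<lambda>n. \<integral>x. Im (f x) \<partial>\<mu>s n) \<longlonglongrightarrow> (\<integral>x. Im (f x) \<partial>\<mu>)"
    using assms(1) unfolding weakly_converges_def by simp_all
  moreover have "integrable (\<mu>s n) f" for n
    using assms(2,3) f(1) B by (rule integrable_continuous_bounded)
  moreover have "integrable \<mu> f"
    using assms(4,5) f(1) B by (rule integrable_continuous_bounded)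
  ultimately show ?thesis
    by (simp add: tendsto_complex_iff)
qed

lemma Im_le_norm_sub_of_real: "Im z \<le> norm (z - complex_of_real x)"
  using abs_Im_le_cmod[of "z - complex_of_real x"] by simp

lemma sub_of_real_nonzero: "Im z > 0 \<Longrightarrow> z - complex_of_real x \<noteq> 0"
  by (auto simp: complex_eq_iff)

lemma norm_inverse_sub_of_real_le:
  assumes "Im z > 0"
  shows "norm (1 / (z - complex_of_real x)) \<le> 1 / Im z"
  using Im_le_norm_sub_of_real[of z x] assms by (simp add: norm_divide frac_le)

lemma integrable_cauchy_kernel:
  assumes "sets M = sets borel" "finite_measure M" "Im z > 0"
  shows "integrable M (\<lambda>x. 1 / (z - complex_of_real x))"
  using assms(1,2) by (rule integrable_continuous_bounded[where B="1 / Im z"])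
    (use assms(3) sub_of_real_nonzero norm_inverse_sub_of_real_le in \<open>auto intro!: continuous_intros\<close>)

lemma integrable_cauchy_kernel_squared:
  assumes "sets M = sets borel" "finite_measure M" "Im z > 0"
  shows "integrable M (\<lambda>x. 1 / (z - complex_of_real x)^2)"
proof -
  have "norm (1 / (z - complex_of_real x)^2) \<le> (1 / Im z)^2" for x
  proof -
    have "norm (1 / (z - complex_of_real x)^2) = norm (1 / (z - complex_of_real x))^2"
      by (simp add: norm_divide norm_power power_one_over)
    also have "\<dots> \<le> (1 / Im z)^2"
      using norm_inverse_sub_of_real_le[OF assms(3)] by (rule power_mono) simp
    finally show ?thesis .
  qed
  then show ?thesis
    using assms(3) sub_of_real_nonzero
    by (intro integrable_continuous_bounded[OF assms(1,2)]) (auto intro!: continuous_intros)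
qed

lemma norm_cauchy_transform_le:
  assumes "sets M = sets borel" "finite_measure M" "Im z > 0"
  shows "norm (cauchy_transform M z) \<le> measure M (space M) / Im z"
  using norm_integral_le_bound_mass[OF assms(2) integrable_cauchy_kernel[OF assms]
      norm_inverse_sub_of_real_le[OF assms(3)]]
  by (simp add: cauchy_transform_def)

lemma inverse_diff_quotient_plus_inverse_square:
  fixes a b :: "'a::field"
  assumes "a \<noteq> 0" "b \<noteq> 0" "a \<noteq> b"
  shows "(1 / a - 1 / b) / (a - b) + 1 / b^2 = (a - b) / (a * b^2)"
  using assms by (simp add: field_simps power2_eq_square)

lemma cauchy_transform_diff_quotient:
  assumes M: "sets M = sets borel" "finite_measure M"
    and z: "Im z > 0" and w: "Im w > 0" "w \<noteq> z"
  shows "(cauchy_transform M w - cauchy_transform M z) / (w - z)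
           + (\<integral>x. 1 / (z - complex_of_real x)^2 \<partial>M)
         = (\<integral>x. (w - z) / ((w - complex_of_real x) * (z - complex_of_real x)^2) \<partial>M)"
proof -
  have "(cauchy_transform M w - cauchy_transform M z) / (w - z)
          + (\<integral>x. 1 / (z - complex_of_real x)^2 \<partial>M)
        = (\<integral>x. (1 / (w - complex_of_real x) - 1 / (z - complex_of_real x)) / (w - z)
                + 1 / (z - complex_of_real x)^2 \<partial>M)"
    unfolding cauchy_transform_def
    using integrable_cauchy_kernel[OF M z] integrable_cauchy_kernel[OF M w(1)]
      integrable_cauchy_kernel_squared[OF M z]
    by simp
  also have "\<dots> = (\<integral>x. (w - z) / ((w - complex_of_real x) * (z - complex_of_real x)^2) \<partial>M)"
  proof (intro Bochner_Integration.integral_cong refl)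
    fix x
    show "(1 / (w - complex_of_real x) - 1 / (z - complex_of_real x)) / (w - z)
            + 1 / (z - complex_of_real x)^2
          = (w - z) / ((w - complex_of_real x) * (z - complex_of_real x)^2)"
      using inverse_diff_quotient_plus_inverse_square[OF sub_of_real_nonzero[OF w(1)]
          sub_of_real_nonzero[OF z], of x x] w(2)
      by simp
  qed
  finally show ?thesis .
qed

lemma cauchy_transform_has_field_derivative:
  assumes M: "sets M = sets borel" "finite_measure M" and z: "Im z > 0"
  shows "(cauchy_transform M has_field_derivative
           - (\<integral>x. 1 / (z - complex_of_real x)^2 \<partial>M)) (at z)"
proof -
  define G where "G = cauchy_transform M"
  define D where "D = - (\<integral>x. 1 / (z - complex_of_real x)^2 \<partial>M)"
  define C where "C = 2 / Im z ^ 3 * measure M (space M)"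
  have estimate: "norm ((G w - G z) / (w - z) - D) \<le> norm (w - z) * C"
    if w: "w \<noteq> z" "dist w z < Im z / 2" for w
  proof -
    have "\<bar>Im w - Im z\<bar> \<le> norm (w - z)"
      using abs_Im_le_cmod[of "w - z"] by simp
    then have Im_w: "Im z / 2 < Im w"
      using w(2) by (simp add: dist_norm)
    then have Im_w_pos: "Im w > 0"
      using z by simp
    have bound: "norm ((w - z) / ((w - complex_of_real x) * (z - complex_of_real x)^2))
        \<le> norm (w - z) * (2 / Im z ^ 3)" for x
    proof -
      have "Im z / 2 * Im z ^ 2 \<le> norm (w - complex_of_real x) * norm (z - complex_of_real x) ^ 2"
        using Im_le_norm_sub_of_real[of w x] Im_le_norm_sub_of_real[of z x] Im_w z
        by (intro mult_mono power_mono) auto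
      moreover have "Im z / 2 * Im z ^ 2 > 0"
        using z by simp
      ultimately have "norm (w - z) / (norm (w - complex_of_real x) * norm (z - complex_of_real x) ^ 2)
          \<le> norm (w - z) / (Im z / 2 * Im z ^ 2)"
        by (intro divide_left_mono) auto
      also have "\<dots> = norm (w - z) * (2 / Im z ^ 3)"
        by (simp add: field_simps power3_eq_cube power2_eq_square)
      finally show ?thesis
        by (simp add: norm_divide norm_mult norm_power)
    qed
    have "continuous_on UNIV
        (\<lambda>x. (w - z) / ((w - complex_of_real x) * (z - complex_of_real x)^2))"
      using sub_of_real_nonzero[OF z] sub_of_real_nonzero[OF Im_w_pos]
      by (intro continuous_intros) simp_all
    then have "integrable M (\<lambda>x. (w - z) / ((w - complex_of_real x) * (z - complex_of_real x)^2))"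
      by (rule integrable_continuous_bounded[OF M _ bound])
    have "(G w - G z) / (w - z) - D
        = (\<integral>x. (w - z) / ((w - complex_of_real x) * (z - complex_of_real x)^2) \<partial>M)"
      using cauchy_transform_diff_quotient[OF M z Im_w_pos w(1)]
      unfolding G_def D_def by (simp add: diff_minus_eq_add)
    then show ?thesis
      using norm_integral_le_bound_mass[OF M(2) \<open>integrable M _\<close> bound]
      by (simp add: C_def mult.assoc)
  qed
  have eventually_estimate: "\<forall>\<^sub>F w in at z. norm ((G w - G z) / (w - z) - D) \<le> norm (w - z) * C"
    unfolding eventually_at
  proof (intro exI[of _ "Im z / 2"] conjI ballI impI)
    show "Im z / 2 > 0"
      using z by simp
  qed (use estimate in blast)
  have "((\<lambda>w. norm (w - z) * C) \<longlongrightarrow> norm (z - z) * C) (at z)"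
    by (intro tendsto_intros)
  then have "((\<lambda>w. (G w - G z) / (w - z) - D) \<longlongrightarrow> 0) (at z)"
    using Lim_null_comparison[OF eventually_estimate] by simp
  then have "((\<lambda>w. (G w - G z) / (w - z)) \<longlongrightarrow> D) (at z)"
    by (rule LIM_zero_cancel)
  then show ?thesis
    unfolding G_def D_def has_field_derivative_iff .
qed

lemma holomorphic_on_cauchy_transform:
  assumes "sets M = sets borel" "finite_measure M"
  shows "cauchy_transform M holomorphic_on {z. Im z > 0}"
  using cauchy_transform_has_field_derivative[OF assms]
  by (auto simp: holomorphic_on_open open_halfspace_Im_gt)

lemma cauchy_transform_weakly_converges:
  assumes "weakly_converges \<mu>s \<mu>"
    and "\<And>n. sets (\<mu>s n) = sets borel" "\<And>n. finite_measure (\<mu>s n)"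
    and "sets \<mu> = sets borel" "finite_measure \<mu>"
    and z: "Im z > 0"
  shows "(\<lambda>n. cauchy_transform (\<mu>s n) z) \<longlonglongrightarrow> cauchy_transform \<mu> z"
  unfolding cauchy_transform_def
proof (rule weakly_converges_integral_complex[OF assms(1-5)])
  show "continuous_on UNIV (\<lambda>x. 1 / (z - complex_of_real x))"
    using sub_of_real_nonzero[OF z] by (auto intro!: continuous_intros)
  show "bounded (range (\<lambda>x. 1 / (z - complex_of_real x)))"
    unfolding bounded_iff using norm_inverse_sub_of_real_le[OF z] by blast
qed

lemma cauchy_transform_uniformly_bounded_on_compact:
  assumes "\<And>n. sets (Ms n) = sets borel" "\<And>n. finite_measure (Ms n)"
    and mass: "\<And>n. measure (Ms n) (space (Ms n)) \<le> C"
    and K: "compact K" "K \<subseteq> {z. Im z > 0}"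
  shows "\<exists>B. \<forall>n. \<forall>z\<in>K. norm (cauchy_transform (Ms n) z) \<le> B"
proof (cases "K = {}")
  case False
  have "continuous_on K Im"
    by (intro continuous_intros)
  then obtain z0 where z0: "z0 \<in> K" "\<And>z. z \<in> K \<Longrightarrow> Im z0 \<le> Im z"
    using continuous_attains_inf[OF K(1) False] by blast
  have "Im z0 > 0"
    using z0(1) K(2) by auto
  have "norm (cauchy_transform (Ms n) z) \<le> C / Im z0" if "z \<in> K" for n z
  proof -
    have "Im z > 0"
      using that K(2) by auto
    then have "norm (cauchy_transform (Ms n) z) \<le> measure (Ms n) (space (Ms n)) / Im z"
      by (rule norm_cauchy_transform_le[OF assms(1,2)])
    also have "\<dots> \<le> C / Im z0"
      using mass[of n] order_trans[OF measure_nonneg mass] z0(2)[OF that] \<open>Im z0 > 0\<close>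
      by (intro frac_le) auto
    finally show ?thesis .
  qed
  then show ?thesis
    by blast
qed simp

lemma integral_inverse_square_plus_one_pos:
  fixes M :: "real measure"
  assumes M: "sets M = sets borel" "finite_measure M"
    and nonzero: "emeasure M (space M) \<noteq> 0"
  shows "(\<integral>x. 1 / (x^2 + 1) \<partial>M) > 0"
proof -
  have pos: "x^2 + 1 > (0::real)" for x
    by (simp add: add_nonneg_pos)
  then have nonzero_denom: "x^2 + 1 \<noteq> (0::real)" for x
    by (metis less_irrefl)
  have "norm (1 / (x^2 + 1)) \<le> 1" for x :: real
    using pos[of x] by (simp add: divide_le_eq)
  then have int: "integrable M (\<lambda>x::real. 1 / (x^2 + 1))"
    using M nonzero_denom
    by (intro integrable_continuous_bounded[where B=1]) (auto intro!: continuous_intros)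
  have "(\<integral>x. 1 / (x^2 + 1) \<partial>M) \<noteq> 0"
  proof
    assume "(\<integral>x. 1 / (x^2 + 1) \<partial>M) = 0"
    then have "AE x in M. 1 / (x^2 + 1) = 0"
      using integral_nonneg_eq_0_iff_AE[OF int] pos by (simp add: less_imp_le)
    then have "AE x in M. False"
      by (rule eventually_mono) (simp add: nonzero_denom)
    with nonzero show False
      by (simp add: eventually_False ae_filter_eq_bot_iff)
  qed
  moreover have "(\<integral>x. 1 / (x^2 + 1) \<partial>M) \<ge> 0"
    using pos by (intro Bochner_Integration.integral_nonneg) (simp add: less_imp_le)
  ultimately show ?thesis
    by linarith
qed

lemma Im_cauchy_transform_at_i:
  fixes M :: "real measure"
  assumes "sets M = sets borel" "finite_measure M"
  shows "Im (cauchy_transform M \<i>) = - (\<integral>x. 1 / (x^2 + 1) \<partial>M)"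
proof -
  have "Im (cauchy_transform M \<i>) = (\<integral>x. Im (1 / (\<i> - complex_of_real x)) \<partial>M)"
    unfolding cauchy_transform_def using integrable_cauchy_kernel[OF assms, of \<i>] by simp
  also have "\<dots> = (\<integral>x. - (1 / (x^2 + 1)) \<partial>M)"
    by (intro Bochner_Integration.integral_cong refl) (simp add: Im_divide power2_eq_square)
  finally show ?thesis
    by simp
qed

lemma cauchy_transform_not_constant:
  fixes M :: "real measure"
  assumes M: "sets M = sets borel" "finite_measure M"
    and nonzero: "emeasure M (space M) \<noteq> 0"
  shows "\<not> cauchy_transform M constant_on {z. Im z > 0}"
proof
  assume "cauchy_transform M constant_on {z. Im z > 0}"
  then have const: "cauchy_transform M (\<i> * complex_of_real y) = cauchy_transform M \<i>"
    if "y > 0" for y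
    using that unfolding constant_on_def by fastforce
  define m where "m = measure M (space M)"
  define c where "c = (\<integral>x. 1 / (x^2 + 1) \<partial>M)"
  have "c > 0" "m \<ge> 0"
    using integral_inverse_square_plus_one_pos[OF M nonzero] by (simp_all add: c_def m_def)
  define y where "y = (m + 1) / c"
  have "y > 0"
    using \<open>c > 0\<close> \<open>m \<ge> 0\<close> by (simp add: y_def)
  then have "norm (cauchy_transform M (\<i> * complex_of_real y)) \<le> m / y"
    using norm_cauchy_transform_le[OF M, of "\<i> * complex_of_real y"] by (simp add: m_def)
  also have "\<dots> < c"
    using \<open>c > 0\<close> \<open>m \<ge> 0\<close> by (simp add: y_def field_simps)
  also have "\<dots> = \<bar>Im (cauchy_transform M \<i>)\<bar>"
    using Im_cauchy_transform_at_i[OF M] \<open>c > 0\<close> by (simp add: c_def)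
  also have "\<dots> \<le> norm (cauchy_transform M \<i>)"
    by (rule abs_Im_le_cmod)
  finally show False
    using const[OF \<open>y > 0\<close>] by simp
qed

theorem proposition2p9:
  fixes \<mu>s :: "nat \<Rightarrow> real measure" and \<mu> :: "real measure"
  assumes "\<And>n. sets (\<mu>s n) = sets borel"
    and "\<And>n. finite_measure (\<mu>s n)"
    and "\<And>n. inj_on (cauchy_transform (\<mu>s n)) {z. Im z > 0}"
    and "sets \<mu> = sets borel"
    and "finite_measure \<mu>"
    and "emeasure \<mu> (space \<mu>) \<noteq> 0"
    and "weakly_converges \<mu>s \<mu>"
  shows "inj_on (cauchy_transform \<mu>) {z. Im z > 0}"
proof -
  have "convergent (\<lambda>n. measure (\<mu>s n) (space (\<mu>s n)))"
    using weakly_converges_measure_space[OF assms(7)] by (rule convergentI)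
  then have "Bseq (\<lambda>n. measure (\<mu>s n) (space (\<mu>s n)))"
    by (rule convergent_imp_Bseq)
  then obtain C where "\<And>n. norm (measure (\<mu>s n) (space (\<mu>s n))) \<le> C"
    unfolding Bseq_def by blast
  then have mass: "\<And>n. measure (\<mu>s n) (space (\<mu>s n)) \<le> C"
    by simp
  show ?thesis
  proof (rule Hurwitz_injective_pointwise_limit[where F="\<lambda>n. cauchy_transform (\<mu>s n)"])
    show "open {z. Im z > 0}"
      by (simp add: open_halfspace_Im_gt)
    show "connected {z. Im z > 0}"
      by (simp add: convex_connected convex_halfspace_Im_gt)
    show "cauchy_transform (\<mu>s n) holomorphic_on {z. Im z > 0}" for n
      by (rule holomorphic_on_cauchy_transform[OF assms(1,2)])
    show "inj_on (cauchy_transform (\<mu>s n)) {z. Im z > 0}" for n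
      by (rule assms(3))
    show "\<exists>B. \<forall>n. \<forall>z\<in>K. norm (cauchy_transform (\<mu>s n) z) \<le> B"
      if "compact K" "K \<subseteq> {z. Im z > 0}" for K
      by (rule cauchy_transform_uniformly_bounded_on_compact[OF assms(1,2) mass that])
    show "(\<lambda>n. cauchy_transform (\<mu>s n) z) \<longlonglongrightarrow> cauchy_transform \<mu> z"
      if "z \<in> {z. Im z > 0}" for z
      using that by (intro cauchy_transform_weakly_converges[OF assms(7,1,2,4,5)]) simp
    show "\<not> cauchy_transform \<mu> constant_on {z. Im z > 0}"
      by (rule cauchy_transform_not_constant[OF assms(4,5,6)])
  qed
qed

end
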